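(* For every integer $n \ge 2$ there exists a Sarvate--Beam cube of order $n$, that is, a function $C:[n]^3 \to \mathbb{Z}_{\ge 0}$ (with $[n]=\{1,\dots,n\}$) whose $3n^2$ line sums $$\sum_{i=1}^n C(i,j,k)\ \ (j,k\in[n]),\qquad \sum_{j=1}^n C(i,j,k)\ \ (i,k\in[n]),\qquad \sum_{k=1}^n C(i,j,k)\ \ (i,j\in[n])$$ are, as a multiset, exactly the integers $0,1,2,\dots,3n^2-1$ (each occurring once).
   Context: A line of an $n\times n\times n$ cube is a set of $n$ positions obtained by fixing two of the three coordinates and letting the third range over $[n]$; a line sum is the sum of the entries over a line. There are $3n^2$ lines. *)

theory Defs
  imports Main "HOL-Library.Multiset"
begin

definition line_sums :: "nat \<Rightarrow> (nat \<Rightarrow> nat \<Rightarrow> nat \<Rightarrow> nat) \<Rightarrow> nat multiset" where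
  "line_sums n C =
     image_mset (\<lambda>(j,k). \<Sum>i\<in>{1..n}. C i j k) (mset_set ({1..n} \<times> {1..n}))
   + image_mset (\<lambda>(i,k). \<Sum>j\<in>{1..n}. C i j k) (mset_set ({1..n} \<times> {1..n}))
   + image_mset (\<lambda>(i,j). \<Sum>k\<in>{1..n}. C i j k) (mset_set ({1..n} \<times> {1..n}))"

definition sarvate_beam_cube :: "nat \<Rightarrow> (nat \<Rightarrow> nat \<Rightarrow> nat \<Rightarrow> nat) \<Rightarrow> bool" where
  "sarvate_beam_cube n C \<longleftrightarrow> line_sums n C = mset_set {0..<3 * n^2}"

end

theory Submission
  imports Defs "HOL-Library.Product_Lexorder"
begin

text \<open>Work with 0-based coordinates in \<open>\<int>/n\<close>. Put the value \<open>n a + b\<close> on the plane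
\<open>c = a + b\<close> and, for each layer \<open>(t, g)\<close>, add \<open>n\<^sup>2 g(a - b)\<close> on the plane \<open>c = a + b + t\<close>.
Every line meets the plane \<open>c = a + b\<close> exactly once, so each line sum has the form
\<open>n a + b + n\<^sup>2 r\<close>, and in each of the three directions every pair \<open>(a, b)\<close> occurs exactly
once; the digit \<open>r\<close> is the sum of the layer weights at \<open>d = a - b\<close>, at \<open>d - t\<close> or at \<open>d + t\<close>
respectively. If these three sums are a permutation of \<open>0, 1, 2\<close> for every \<open>d\<close>, the \<open>3n\<^sup>2\<close>
line sums are exactly the numbers with digits \<open>r < 3\<close>, \<open>a < n\<close>, \<open>b < n\<close> in mixed radix, i.e.
\<open>0, \<dots>, 3n\<^sup>2 - 1\<close>. Suitable layers are built from 3-periodic weight patterns, corrected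
near the ends of their periods when \<open>3\<close> does not divide \<open>n\<close>; small orders are checked directly.\<close>

lemma sum_sum_list_swap:
  "(\<Sum>x\<in>A. sum_list (map (f x) ys)) = (\<Sum>y\<leftarrow>ys. \<Sum>x\<in>A. f x y)"
  by (induction ys) (simp_all add: sum.distrib)

lemma sum_atLeast1_atMost_shift:
  fixes f :: "nat \<Rightarrow> 'a::comm_monoid_add"
  shows "(\<Sum>i\<in>{1..n}. f (i - 1)) = (\<Sum>a<n. f a)"
  using sum.atLeast1_atMost_eq[of "\<lambda>i. f (i - 1)" n] by simp

lemma image_mset_mset_set_reindex:
  assumes "bij_betw \<phi> A B" "\<And>x. x \<in> A \<Longrightarrow> f x = g (\<phi> x)"
  shows "image_mset f (mset_set A) = image_mset g (mset_set B)"
proof (cases "finite A")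
  case True
  then have "image_mset f (mset_set A) = image_mset g (image_mset \<phi> (mset_set A))"
    using assms(2) by (auto simp: multiset.map_comp intro: image_mset_cong)
  also have "image_mset \<phi> (mset_set A) = mset_set B"
    using assms(1) by (simp add: bij_betw_def image_mset_mset_set)
  finally show ?thesis .
next
  case False
  then have "infinite B"
    using assms(1) bij_betw_finite by blast
  with False show ?thesis by simp
qed

lemma image_mset_add3:
  "image_mset f M + image_mset g M + image_mset h M = (\<Sum>x\<in>#M. {#f x, g x, h x#})"
  by (induction M) simp_all

lemma bij_betw_mixed_radix:
  fixes m n :: nat
  shows "bij_betw (\<lambda>(a, b). n * a + b) ({..<m} \<times> {..<n}) {..<m * n}"
proof (rule bij_betw_byWitness[where f' = "\<lambda>x. (x div n, x mod n)"])
  show "(\<lambda>(a, b). n * a + b) ` ({..<m} \<times> {..<n}) \<subseteq> {..<m * n}"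
  proof clarsimp
    fix a b assume "a < m" "b < n"
    then have "n * a + b < n * (a + 1)" by simp
    also have "\<dots> \<le> n * m" using \<open>a < m\<close> by (intro mult_le_mono2) simp
    also have "\<dots> = m * n" by (rule mult.commute)
    finally show "n * a + b < m * n" .
  qed
  show "(\<lambda>x. (x div n, x mod n)) ` {..<m * n} \<subseteq> {..<m} \<times> {..<n}"
    by (auto simp: less_mult_imp_div_less) (metis mod_less_divisor mult_0_right not_gr0 not_less0)
qed auto

lemma image_mset_mixed_radix_shift:
  fixes m n c :: nat
  shows "image_mset (\<lambda>(a, b). n * a + b + c) (mset_set ({..<m} \<times> {..<n})) = mset_set {c..<c + m * n}"
proof -
  have "image_mset (\<lambda>(a, b). n * a + b + c) (mset_set ({..<m} \<times> {..<n}))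
      = image_mset (\<lambda>x. x + c) (image_mset (\<lambda>(a, b). n * a + b) (mset_set ({..<m} \<times> {..<n})))"
    by (simp add: multiset.map_comp comp_def split_def)
  also have "image_mset (\<lambda>(a, b). n * a + b) (mset_set ({..<m} \<times> {..<n})) = mset_set {0..<m * n}"
    using bij_betw_mixed_radix[of n m]
    by (simp add: bij_betw_def image_mset_mset_set atLeast0LessThan)
  also have "image_mset (\<lambda>x. x + c) (mset_set {0..<m * n}) = mset_set {c..<c + m * n}"
    by (subst image_mset_mset_set) (auto simp: inj_on_def add.commute)
  finally show ?thesis .
qed

lemma mset_set_atLeastLessThan_append:
  fixes a b c :: nat
  assumes "a \<le> b" "b \<le> c"
  shows "mset_set {a..<b} + mset_set {b..<c} = mset_set {a..<c}"
  using assms by (simp add: mset_set_Union[symmetric] ivl_disj_int_two ivl_disj_un_two)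

section \<open>Residues modulo \<open>n\<close>\<close>

definition residue :: "nat \<Rightarrow> int \<Rightarrow> nat" where
  "residue n x = nat (x mod int n)"

lemma residue_less: "0 < n \<Longrightarrow> residue n x < n"
  unfolding residue_def by (simp add: nat_less_iff)

lemma of_nat_residue: "0 < n \<Longrightarrow> int (residue n x) = x mod int n"
  unfolding residue_def by simp

lemma residue_of_nat [simp]: "a < n \<Longrightarrow> residue n (int a) = a"
  unfolding residue_def by (simp add: nat_mod_distrib)

lemma residue_eq_iff: "0 < n \<Longrightarrow> residue n x = residue n y \<longleftrightarrow> x mod int n = y mod int n"
  by (metis of_nat_residue of_nat_eq_iff)

lemma residue_add_residue [simp]: "0 < n \<Longrightarrow> residue n (int (residue n x) + y) = residue n (x + y)"
  by (simp add: residue_eq_iff of_nat_residue mod_add_left_eq)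

lemma residue_diff_residue [simp]: "0 < n \<Longrightarrow> residue n (int (residue n x) - y) = residue n (x - y)"
  by (simp add: residue_eq_iff of_nat_residue mod_diff_left_eq)

lemma residue_add_residue_right [simp]: "0 < n \<Longrightarrow> residue n (x + int (residue n y)) = residue n (x + y)"
  by (simp add: residue_eq_iff of_nat_residue mod_add_right_eq)

lemma residue_diff_residue_right [simp]: "0 < n \<Longrightarrow> residue n (x - int (residue n y)) = residue n (x - y)"
  by (simp add: residue_eq_iff of_nat_residue mod_diff_right_eq)

lemma eq_residue_iff:
  assumes "a < n" "c < n"
  shows "c = residue n (int a + e) \<longleftrightarrow> a = residue n (int c - e)"
proof -
  have n: "0 < n" using assms by simp
  have "c = residue n (int a + e) \<longleftrightarrow> residue n (int c) = residue n (int a + e)"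
    using assms by simp
  also have "\<dots> \<longleftrightarrow> int n dvd int c - (int a + e)"
    by (simp add: residue_eq_iff[OF n] mod_eq_dvd_iff)
  also have "\<dots> \<longleftrightarrow> int n dvd (int c - e) - int a"
    by (simp add: algebra_simps)
  also have "\<dots> \<longleftrightarrow> residue n (int c - e) = residue n (int a)"
    by (simp add: residue_eq_iff[OF n] mod_eq_dvd_iff)
  finally show ?thesis
    using assms by auto
qed

lemma sum_residue_delta:
  fixes h :: "nat \<Rightarrow> 'b::comm_monoid_add"
  assumes "c < n"
  shows "(\<Sum>a<n. if c = residue n (int a + e) then h a else 0) = h (residue n (int c - e))"
proof -
  have "(\<Sum>a<n. if c = residue n (int a + e) then h a else 0)
      = (\<Sum>a<n. if a = residue n (int c - e) then h a else 0)"
    using assms eq_residue_iff by (intro sum.cong) auto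
  also have "\<dots> = h (residue n (int c - e))"
    using assms residue_less by simp
  finally show ?thesis .
qed

lemma residue_pred:
  assumes "1 \<le> k" "k \<le> n"
  shows "residue n (int k - 1) = k - 1"
  using assms residue_of_nat[of "k - 1" n] by (simp add: of_nat_diff)

lemma residue_diff_eq:
  assumes "d < n" "t \<le> n"
  shows "residue n (int d - int t) = (if t \<le> d then d - t else d + n - t)"
proof -
  have "residue n (int d - int t) = residue n (int (if t \<le> d then d - t else d + n - t))"
    using assms by (auto simp: residue_eq_iff mod_eq_dvd_iff of_nat_diff)
  also have "\<dots> = (if t \<le> d then d - t else d + n - t)"
    using assms by (intro residue_of_nat) auto
  finally show ?thesis .
qed

lemma residue_add_eq:
  assumes "d < n" "t \<le> n"
  shows "residue n (int d + int t) = (if d + t < n then d + t else d + t - n)"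
proof -
  have "residue n (int d + int t) = residue n (int (if d + t < n then d + t else d + t - n))"
    using assms by (auto simp: residue_eq_iff mod_eq_dvd_iff of_nat_diff)
  also have "\<dots> = (if d + t < n then d + t else d + t - n)"
    using assms by (intro residue_of_nat) auto
  finally show ?thesis .
qed

section \<open>Layered cubes\<close>

type_synonym layers = "(nat \<times> (nat \<Rightarrow> nat)) list"

definition layer_sum :: "nat \<Rightarrow> layers \<Rightarrow> int \<Rightarrow> nat \<Rightarrow> nat" where
  "layer_sum n L s d = (\<Sum>(t, g)\<leftarrow>L. g (residue n (int d + s * int t)))"

definition perm012 :: "nat \<Rightarrow> nat \<Rightarrow> nat \<Rightarrow> bool" where
  "perm012 x y z \<longleftrightarrow> x \<le> 2 \<and> y \<le> 2 \<and> z \<le> 2 \<and> x \<noteq> y \<and> y \<noteq> z \<and> x \<noteq> z"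

definition balanced_at :: "nat \<Rightarrow> layers \<Rightarrow> nat \<Rightarrow> bool" where
  "balanced_at n L d \<longleftrightarrow> perm012 (layer_sum n L 0 d) (layer_sum n L (-1) d) (layer_sum n L 1 d)"

definition admissible_layers :: "nat \<Rightarrow> layers \<Rightarrow> bool" where
  "admissible_layers n L \<longleftrightarrow> (\<forall>d<n. balanced_at n L d)"

definition layered_cube :: "nat \<Rightarrow> layers \<Rightarrow> nat \<Rightarrow> nat \<Rightarrow> nat \<Rightarrow> nat" where
  "layered_cube n L a b c =
     (if c = residue n (int a + int b) then n * a + b else 0)
   + n^2 * (\<Sum>(t, g)\<leftarrow>L. if c = residue n (int a + int b + int t) then g (residue n (int a - int b)) else 0)"

definition line_value :: "nat \<Rightarrow> layers \<Rightarrow> int \<Rightarrow> nat \<times> nat \<Rightarrow> nat" where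
  "line_value n L s = (\<lambda>(a, b). n * a + b + n^2 * layer_sum n L s (residue n (int a - int b)))"

lemma perm012_mset: "perm012 x y z \<Longrightarrow> {#x, y, z#} = {#0, 1, 2#}"
  unfolding perm012_def by (auto simp: numeral_2_eq_2 le_Suc_eq add_mset_commute)

lemma layered_cube_line_sum_c:
  assumes "a < n" "b < n"
  shows "(\<Sum>c<n. layered_cube n L a b c) = line_value n L 0 (a, b)"
  using assms residue_less[of n]
  unfolding layered_cube_def line_value_def layer_sum_def sum.distrib sum_distrib_left[symmetric]
    sum_sum_list_swap
  by (simp add: split_def)

lemma layered_cube_line_sum_a:
  assumes "b < n" "c < n"
  shows "(\<Sum>a<n. layered_cube n L a b c) = line_value n L (-1) (residue n (int c - int b), b)"
proof -
  have "0 < n" using assms by simp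
  then show ?thesis
    unfolding layered_cube_def line_value_def layer_sum_def sum.distrib sum_distrib_left[symmetric]
      sum_sum_list_swap add.assoc split_def sum_residue_delta[OF \<open>c < n\<close>]
    by (simp add: algebra_simps)
qed

lemma layered_cube_line_sum_b:
  assumes "a < n" "c < n"
  shows "(\<Sum>b<n. layered_cube n L a b c) = line_value n L 1 (a, residue n (int c - int a))"
proof -
  have "0 < n" using assms by simp
  then show ?thesis
    unfolding layered_cube_def line_value_def layer_sum_def sum.distrib sum_distrib_left[symmetric]
      sum_sum_list_swap add.commute[of "int a"] add.assoc split_def sum_residue_delta[OF \<open>c < n\<close>]
    by (simp add: algebra_simps)
qed

lemma image_mset_line_sums_k:
  "image_mset (\<lambda>(i, j). \<Sum>k\<in>{1..n}. layered_cube n L (i - 1) (j - 1) (k - 1)) (mset_set ({1..n} \<times> {1..n}))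
    = image_mset (line_value n L 0) (mset_set ({..<n} \<times> {..<n}))"
proof (rule image_mset_mset_set_reindex)
  show "bij_betw (\<lambda>(i, j). (i - 1, j - 1)) ({1..n} \<times> {1..n}) ({..<n} \<times> {..<n})"
    by (rule bij_betw_byWitness[where f' = "\<lambda>(a, b). (a + 1, b + 1)"]) auto
next
  fix x assume "x \<in> {1..n} \<times> {1..n}"
  then obtain i j where x: "x = (i, j)" "1 \<le> i" "i \<le> n" "1 \<le> j" "j \<le> n"
    by auto
  then have "(\<Sum>k\<in>{1..n}. layered_cube n L (i - 1) (j - 1) (k - 1)) = line_value n L 0 (i - 1, j - 1)"
    unfolding sum_atLeast1_atMost_shift[of "layered_cube n L (i - 1) (j - 1)"]
    by (simp add: layered_cube_line_sum_c)
  with x show "(\<lambda>(i, j). \<Sum>k\<in>{1..n}. layered_cube n L (i - 1) (j - 1) (k - 1)) x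
      = line_value n L 0 ((\<lambda>(i, j). (i - 1, j - 1)) x)"
    by simp
qed

lemma image_mset_line_sums_i:
  assumes "0 < n"
  shows "image_mset (\<lambda>(j, k). \<Sum>i\<in>{1..n}. layered_cube n L (i - 1) (j - 1) (k - 1)) (mset_set ({1..n} \<times> {1..n}))
    = image_mset (line_value n L (-1)) (mset_set ({..<n} \<times> {..<n}))"
proof (rule image_mset_mset_set_reindex)
  show "bij_betw (\<lambda>(j, k). (residue n (int k - int j), j - 1)) ({1..n} \<times> {1..n}) ({..<n} \<times> {..<n})"
    by (rule bij_betw_byWitness[where f' = "\<lambda>(a, b). (b + 1, residue n (int a + int b) + 1)"])
      (auto simp: assms residue_less Suc_leI residue_pred)
next
  fix x assume "x \<in> {1..n} \<times> {1..n}"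
  then obtain j k where x: "x = (j, k)" "1 \<le> j" "j \<le> n" "1 \<le> k" "k \<le> n"
    by auto
  then have "(\<Sum>i\<in>{1..n}. layered_cube n L (i - 1) (j - 1) (k - 1))
      = line_value n L (-1) (residue n (int k - int j), j - 1)"
    unfolding sum_atLeast1_atMost_shift[of "\<lambda>a. layered_cube n L a (j - 1) (k - 1)"]
    by (simp add: layered_cube_line_sum_a of_nat_diff)
  with x show "(\<lambda>(j, k). \<Sum>i\<in>{1..n}. layered_cube n L (i - 1) (j - 1) (k - 1)) x
      = line_value n L (-1) ((\<lambda>(j, k). (residue n (int k - int j), j - 1)) x)"
    by simp
qed

lemma image_mset_line_sums_j:
  assumes "0 < n"
  shows "image_mset (\<lambda>(i, k). \<Sum>j\<in>{1..n}. layered_cube n L (i - 1) (j - 1) (k - 1)) (mset_set ({1..n} \<times> {1..n}))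
    = image_mset (line_value n L 1) (mset_set ({..<n} \<times> {..<n}))"
proof (rule image_mset_mset_set_reindex)
  show "bij_betw (\<lambda>(i, k). (i - 1, residue n (int k - int i))) ({1..n} \<times> {1..n}) ({..<n} \<times> {..<n})"
    by (rule bij_betw_byWitness[where f' = "\<lambda>(a, b). (a + 1, residue n (int a + int b) + 1)"])
      (auto simp: assms residue_less Suc_leI residue_pred)
next
  fix x assume "x \<in> {1..n} \<times> {1..n}"
  then obtain i k where x: "x = (i, k)" "1 \<le> i" "i \<le> n" "1 \<le> k" "k \<le> n"
    by auto
  then have "(\<Sum>j\<in>{1..n}. layered_cube n L (i - 1) (j - 1) (k - 1))
      = line_value n L 1 (i - 1, residue n (int k - int i))"
    unfolding sum_atLeast1_atMost_shift[of "\<lambda>b. layered_cube n L (i - 1) b (k - 1)"]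
    by (simp add: layered_cube_line_sum_b of_nat_diff)
  with x show "(\<lambda>(i, k). \<Sum>j\<in>{1..n}. layered_cube n L (i - 1) (j - 1) (k - 1)) x
      = line_value n L 1 ((\<lambda>(i, k). (i - 1, residue n (int k - int i))) x)"
    by simp
qed

lemma image_mset_line_values:
  assumes n: "0 < n" and adm: "admissible_layers n L"
  defines "B \<equiv> mset_set ({..<n} \<times> {..<n})"
  shows "image_mset (line_value n L (-1)) B + image_mset (line_value n L 1) B + image_mset (line_value n L 0) B
    = mset_set {0..<3 * n^2}"
proof -
  define block where "block r = (\<lambda>(a, b). n * a + b + n^2 * r)" for r
  have block_image: "image_mset (block r) B = mset_set {r * n^2..<(r + 1) * n^2}" for r
    using image_mset_mixed_radix_shift[where m = n and n = n and c = "n^2 * r"]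
    by (simp add: block_def B_def power2_eq_square algebra_simps)
  have lines_eq_blocks: "{#line_value n L (-1) p, line_value n L 1 p, line_value n L 0 p#}
      = {#block 0 p, block 1 p, block 2 p#}" if "p \<in># B" for p
  proof -
    obtain a b where p: "p = (a, b)" "a < n" "b < n"
      using \<open>p \<in># B\<close> by (auto simp: B_def)
    define d where "d = residue n (int a - int b)"
    have "d < n" using n residue_less by (simp add: d_def)
    then have "{#layer_sum n L 0 d, layer_sum n L (-1) d, layer_sum n L 1 d#} = {#0, 1, 2#}"
      using adm perm012_mset by (simp add: admissible_layers_def balanced_at_def)
    then have "image_mset (\<lambda>r. n * a + b + n^2 * r) {#layer_sum n L (-1) d, layer_sum n L 1 d, layer_sum n L 0 d#}
        = image_mset (\<lambda>r. n * a + b + n^2 * r) {#0, 1, 2#}"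
      by (simp add: add_mset_commute)
    then show ?thesis
      by (simp add: p line_value_def block_def d_def)
  qed
  have "image_mset (line_value n L (-1)) B + image_mset (line_value n L 1) B + image_mset (line_value n L 0) B
      = (\<Sum>p\<in>#B. {#block 0 p, block 1 p, block 2 p#})"
    unfolding image_mset_add3 using lines_eq_blocks
    by (intro arg_cong[where f = sum_mset] image_mset_cong)
  also have "\<dots> = image_mset (block 0) B + image_mset (block 1) B + image_mset (block 2) B"
    by (rule image_mset_add3[symmetric])
  also have "\<dots> = mset_set {0..<n^2} + mset_set {n^2..<2 * n^2} + mset_set {2 * n^2..<3 * n^2}"
    using block_image[of 0] block_image[of 1] block_image[of 2] by (simp add: mult_2)
  also have "\<dots> = mset_set {0..<3 * n^2}"
    by (simp add: mset_set_atLeastLessThan_append)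
  finally show ?thesis .
qed

lemma sarvate_beam_layered_cube:
  assumes "0 < n" "admissible_layers n L"
  shows "sarvate_beam_cube n (\<lambda>i j k. layered_cube n L (i - 1) (j - 1) (k - 1))"
  unfolding sarvate_beam_cube_def line_sums_def image_mset_line_sums_i[OF assms(1)]
    image_mset_line_sums_j[OF assms(1)] image_mset_line_sums_k
  by (rule image_mset_line_values[OF assms])

section \<open>Admissible layers for every order \<open>n \<ge> 3\<close>\<close>

lemma admissible_layersI: "(\<And>d. d < n \<Longrightarrow> balanced_at n L d) \<Longrightarrow> admissible_layers n L"
  by (simp add: admissible_layers_def)

lemma layer_sum_Nil: "layer_sum n [] s d = 0"
  by (simp add: layer_sum_def)

lemma layer_sum_zero_Cons:
  "d < n \<Longrightarrow> layer_sum n ((t, g) # L) 0 d = g d + layer_sum n L 0 d"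
  by (simp add: layer_sum_def)

lemma layer_sum_minus_one_Cons:
  "d < n \<Longrightarrow> t \<le> n \<Longrightarrow>
    layer_sum n ((t, g) # L) (-1) d = g (if t \<le> d then d - t else d + n - t) + layer_sum n L (-1) d"
  by (simp add: layer_sum_def residue_diff_eq[symmetric])

lemma layer_sum_one_Cons:
  "d < n \<Longrightarrow> t \<le> n \<Longrightarrow>
    layer_sum n ((t, g) # L) 1 d = g (if d + t < n then d + t else d + t - n) + layer_sum n L 1 d"
  by (simp add: layer_sum_def residue_add_eq[symmetric])

definition period3 :: "nat \<Rightarrow> nat \<Rightarrow> nat \<Rightarrow> nat \<Rightarrow> nat" where
  "period3 p0 p1 p2 x = (if x mod 3 = 0 then p0 else if x mod 3 = 1 then p1 else p2)"

definition unit_at :: "nat \<Rightarrow> nat \<Rightarrow> nat" where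
  "unit_at s x = (if x = s then 1 else 0)"

lemmas balanced_at_simps =
  balanced_at_def layer_sum_Nil layer_sum_zero_Cons layer_sum_minus_one_Cons layer_sum_one_Cons unit_at_def

lemma perm012_period3:
  assumes "perm012 p0 p1 p2" "z mod 3 = (x + 1) mod 3" "y mod 3 = (x + 2) mod 3"
  shows "perm012 (period3 p0 p1 p2 z) (period3 p0 p1 p2 x) (period3 p0 p1 p2 y)"
proof -
  have zy: "z mod 3 = (x mod 3 + 1) mod 3" "y mod 3 = (x mod 3 + 2) mod 3"
    using assms(2,3) by (simp_all only: mod_add_left_eq)
  have "x mod 3 < 3" by simp
  then consider "x mod 3 = 0" | "x mod 3 = 1" | "x mod 3 = 2" by linarith
  then show ?thesis
    by cases (use assms(1) zy in \<open>simp_all add: period3_def perm012_def\<close>)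
qed

lemma mod_3_Suc_simps: "Suc (3 * m) mod 3 = 1" "Suc (Suc (3 * m)) mod 3 = 2"
  by (simp_all add: mod_Suc)

lemma admissible_layers_3m3: "admissible_layers (3 * m + 3) [(1, period3 1 2 0)]"
proof (rule admissible_layersI)
  fix d assume "d < 3 * m + 3"
  then consider "d \<in> {0, 3 * m + 2}"
    | "1 \<le> d" "d \<le> 3 * m + 1"
    unfolding insert_iff empty_iff by linarith
  then show "balanced_at (3 * m + 3) [(1, period3 1 2 0)] d"
  proof cases
    case 1
    then show ?thesis
      by (auto simp: balanced_at_simps period3_def perm012_def mod_3_Suc_simps)
  next
    case 2
    then obtain k where "d = k + 1" "k \<le> 3 * m"
      by (intro that[of "d - 1"]) auto
    then show ?thesis
      by (auto simp: balanced_at_simps intro!: perm012_period3) (auto simp: perm012_def algebra_simps)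
  qed
qed

text \<open>In each construction below, the unit layers vanish away from finitely many \<open>d\<close>, and
there the three layer sums are consecutive values of a 3-periodic pattern; the exceptional
values of \<open>d\<close> are evaluated directly.\<close>

definition base_6m13 :: "nat \<Rightarrow> nat \<Rightarrow> nat" where
  "base_6m13 m x =
     (if x = 1 then 2 else if x = 2 then 0 else if x = 3 * m + 9 then 0
      else if x < 3 * m + 9 then period3 1 2 0 (x + 2) else period3 1 0 2 (x - (3 * m + 9)))"

definition layers_6m13 :: "nat \<Rightarrow> layers" where
  "layers_6m13 m = [(1, base_6m13 m), (6 * m + 12, unit_at 2), (3 * m + 7, unit_at 3)]"

lemma admissible_layers_6m13: "admissible_layers (6 * m + 13) (layers_6m13 m)"
proof (rule admissible_layersI)
  fix d assume "d < 6 * m + 13"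
  then consider "d \<in> {0, 1, 2, 3, 3 * m + 8, 3 * m + 9, 3 * m + 10, 6 * m + 12}"
    | "4 \<le> d" "d \<le> 3 * m + 7"
    | "3 * m + 11 \<le> d" "d \<le> 6 * m + 11"
    unfolding insert_iff empty_iff by linarith
  then show "balanced_at (6 * m + 13) (layers_6m13 m) d"
  proof cases
    case 1
    then show ?thesis
      by (auto simp: balanced_at_simps layers_6m13_def base_6m13_def period3_def perm012_def mod_3_Suc_simps)
  next
    case 2
    then obtain k where "d = k + 4" "k \<le> 3 * m + 3"
      by (intro that[of "d - 4"]) auto
    then show ?thesis
      by (auto simp: balanced_at_simps layers_6m13_def base_6m13_def intro!: perm012_period3)
        (auto simp: perm012_def algebra_simps)
  next
    case 3
    then obtain k where "d = k + (3 * m + 11)" "k \<le> 3 * m"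
      by (intro that[of "d - (3 * m + 11)"]) auto
    then show ?thesis
      by (auto simp: balanced_at_simps layers_6m13_def base_6m13_def intro!: perm012_period3)
        (auto simp: perm012_def algebra_simps)
  qed
qed

definition base_6m14 :: "nat \<Rightarrow> nat \<Rightarrow> nat" where
  "base_6m14 m x =
     (if x < 3 then (if x = 2 then 1 else 0) else if x = 3 * m + 6 then 0
      else if x < 3 * m + 7 then period3 1 0 2 x else period3 0 1 2 (x - (3 * m + 7)))"

definition layers_6m14 :: "nat \<Rightarrow> layers" where
  "layers_6m14 m = [(1, base_6m14 m), (6 * m + 13, unit_at 1), (2, unit_at 1), (3 * m + 7, unit_at (3 * m + 7)),
     (6 * m + 13, unit_at (3 * m + 6))]"

lemma admissible_layers_6m14: "admissible_layers (6 * m + 14) (layers_6m14 m)"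
proof (rule admissible_layersI)
  fix d assume "d < 6 * m + 14"
  then consider "d \<in> {0, 1, 2, 3, 3 * m + 5, 3 * m + 6, 3 * m + 7, 6 * m + 13}"
    | "4 \<le> d" "d \<le> 3 * m + 4"
    | "3 * m + 8 \<le> d" "d \<le> 6 * m + 12"
    unfolding insert_iff empty_iff by linarith
  then show "balanced_at (6 * m + 14) (layers_6m14 m) d"
  proof cases
    case 1
    then show ?thesis
      by (auto simp: balanced_at_simps layers_6m14_def base_6m14_def period3_def perm012_def mod_3_Suc_simps)
  next
    case 2
    then obtain k where "d = k + 4" "k \<le> 3 * m"
      by (intro that[of "d - 4"]) auto
    then show ?thesis
      by (auto simp: balanced_at_simps layers_6m14_def base_6m14_def intro!: perm012_period3)
        (auto simp: perm012_def algebra_simps)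
  next
    case 3
    then obtain k where "d = k + (3 * m + 8)" "k \<le> 3 * m + 4"
      by (intro that[of "d - (3 * m + 8)"]) auto
    then show ?thesis
      by (auto simp: balanced_at_simps layers_6m14_def base_6m14_def intro!: perm012_period3)
        (auto simp: perm012_def algebra_simps)
  qed
qed

definition base_6m16 :: "nat \<Rightarrow> nat \<Rightarrow> nat" where
  "base_6m16 m x =
     (if x = 3 * m + 8 then 0
      else if x < 3 * m + 8 then period3 0 1 2 x else period3 1 0 2 (x - (3 * m + 8)))"

definition layers_6m16 :: "nat \<Rightarrow> layers" where
  "layers_6m16 m = [(1, base_6m16 m), (3 * m + 8, unit_at 0), (3 * m + 9, unit_at 0), (3 * m + 8, unit_at (3 * m + 7))]"

lemma admissible_layers_6m16: "admissible_layers (6 * m + 16) (layers_6m16 m)"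
proof (rule admissible_layersI)
  fix d assume "d < 6 * m + 16"
  then consider "d \<in> {0, 3 * m + 7, 3 * m + 8, 3 * m + 9, 6 * m + 15}"
    | "1 \<le> d" "d \<le> 3 * m + 6"
    | "3 * m + 10 \<le> d" "d \<le> 6 * m + 14"
    unfolding insert_iff empty_iff by linarith
  then show "balanced_at (6 * m + 16) (layers_6m16 m) d"
  proof cases
    case 1
    then show ?thesis
      by (auto simp: balanced_at_simps layers_6m16_def base_6m16_def period3_def perm012_def mod_3_Suc_simps)
  next
    case 2
    then obtain k where "d = k + 1" "k \<le> 3 * m + 5"
      by (intro that[of "d - 1"]) auto
    then show ?thesis
      by (auto simp: balanced_at_simps layers_6m16_def base_6m16_def intro!: perm012_period3)
        (auto simp: perm012_def algebra_simps)
  next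
    case 3
    then obtain k where "d = k + (3 * m + 10)" "k \<le> 3 * m + 4"
      by (intro that[of "d - (3 * m + 10)"]) auto
    then show ?thesis
      by (auto simp: balanced_at_simps layers_6m16_def base_6m16_def intro!: perm012_period3)
        (auto simp: perm012_def algebra_simps)
  qed
qed

definition base_6m17 :: "nat \<Rightarrow> nat \<Rightarrow> nat" where
  "base_6m17 m x =
     (if x < 3 then (if x = 1 then 1 else 0) else if x = 3 * m + 8 then 1
      else if x < 3 * m + 8 then period3 2 0 1 x else period3 2 1 0 (x - (3 * m + 8)))"

definition layers_6m17 :: "nat \<Rightarrow> layers" where
  "layers_6m17 m = [(1, base_6m17 m), (3 * m + 9, unit_at 0), (6 * m + 16, unit_at 0), (2, unit_at 1)]"

lemma admissible_layers_6m17: "admissible_layers (6 * m + 17) (layers_6m17 m)"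
proof (rule admissible_layersI)
  fix d assume "d < 6 * m + 17"
  then consider "d \<in> {0, 1, 2, 3, 3 * m + 7, 3 * m + 8, 3 * m + 9, 6 * m + 16}"
    | "4 \<le> d" "d \<le> 3 * m + 6"
    | "3 * m + 10 \<le> d" "d \<le> 6 * m + 15"
    unfolding insert_iff empty_iff by linarith
  then show "balanced_at (6 * m + 17) (layers_6m17 m) d"
  proof cases
    case 1
    then show ?thesis
      by (auto simp: balanced_at_simps layers_6m17_def base_6m17_def period3_def perm012_def mod_3_Suc_simps)
  next
    case 2
    then obtain k where "d = k + 4" "k \<le> 3 * m + 2"
      by (intro that[of "d - 4"]) auto
    then show ?thesis
      by (auto simp: balanced_at_simps layers_6m17_def base_6m17_def intro!: perm012_period3)
        (auto simp: perm012_def algebra_simps)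
  next
    case 3
    then obtain k where "d = k + (3 * m + 10)" "k \<le> 3 * m + 5"
      by (intro that[of "d - (3 * m + 10)"]) auto
    then show ?thesis
      by (auto simp: balanced_at_simps layers_6m17_def base_6m17_def intro!: perm012_period3)
        (auto simp: perm012_def algebra_simps)
  qed
qed

definition unit_layers :: "(nat \<times> nat) list \<Rightarrow> layers" where
  "unit_layers xs = map (\<lambda>(t, s). (t, unit_at s)) xs"

lemma admissible_layers_upt: "admissible_layers n L \<longleftrightarrow> list_all (balanced_at n L) [0..<n]"
  by (auto simp: admissible_layers_def list_all_iff)

lemmas admissible_layers_numeral_simps =
  admissible_layers_upt balanced_at_def layer_sum_def unit_layers_def residue_def unit_at_def perm012_def upt_rec

lemma admissible_layers_4:
  "admissible_layers 4 (unit_layers [(1,1), (2,0), (3,0), (2,1)])"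
  by (simp add: admissible_layers_numeral_simps)

lemma admissible_layers_5:
  "admissible_layers 5 (unit_layers [(1,1), (1,3), (3,0), (4,0), (2,1)])"
  by (simp add: admissible_layers_numeral_simps)

lemma admissible_layers_7:
  "admissible_layers 7 (unit_layers [(1,1), (1,1), (1,4), (1,5), (1,5), (6,2), (4,3)])"
  by (simp add: admissible_layers_numeral_simps)

lemma admissible_layers_8:
  "admissible_layers 8 (unit_layers [(1,0), (1,1), (1,3), (1,6), (2,0), (2,1), (7,4), (7,5)])"
  by (simp add: admissible_layers_numeral_simps)

lemma admissible_layers_10:
  "admissible_layers 10 (unit_layers [(1,1), (1,2), (1,2), (1,4), (1,7), (1,7), (1,8), (5,0), (6,0), (5,4)])"
  by (simp add: admissible_layers_numeral_simps)

lemma admissible_layers_11: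
  "admissible_layers 11 (unit_layers [(1,1), (1,3), (1,3), (1,5), (1,6), (1,8), (1,8), (1,9), (6,0), (10,0), (2,1)])"
  by (simp add: admissible_layers_numeral_simps)

lemma admissible_layers_small:
  assumes "n \<in> {4, 5, 7, 8, 10, 11}"
  shows "\<exists>L. admissible_layers n L"
  using assms admissible_layers_4 admissible_layers_5 admissible_layers_7 admissible_layers_8
    admissible_layers_10 admissible_layers_11 by blast

lemma admissible_layers_exist:
  assumes "3 \<le> n"
  shows "\<exists>L. admissible_layers n L"
proof -
  define q r where "q = n div 6" and "r = n mod 6"
  have n: "n = 6 * q + r" and "r < 6"
    by (simp_all add: q_def r_def)
  then consider "r = 0" | "r = 3" | "r \<in> {1, 2, 4, 5}"
    unfolding insert_iff empty_iff by linarith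
  then show ?thesis
  proof cases
    case 1
    then have "n = 3 * (2 * q - 1) + 3" using n assms by linarith
    then show ?thesis using admissible_layers_3m3 by metis
  next
    case 2
    then have "n = 3 * (2 * q) + 3" using n by linarith
    then show ?thesis using admissible_layers_3m3 by metis
  next
    case 3
    show ?thesis
    proof (cases "q \<le> 1")
      case True
      then have "q = 0 \<or> q = 1" by linarith
      with 3 n assms have "n \<in> {4, 5, 7, 8, 10, 11}" by auto
      then show ?thesis by (rule admissible_layers_small)
    next
      case False
      with 3 n have "n \<in> {6 * (q - 2) + 13, 6 * (q - 2) + 14, 6 * (q - 2) + 16, 6 * (q - 2) + 17}"
        by auto
      then show ?thesis
        using admissible_layers_6m13 admissible_layers_6m14 admissible_layers_6m16 admissible_layers_6m17
        by blast
    qed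
  qed
qed

text \<open>For \<open>n = 2\<close> no admissible layers exist: modulo 2, \<open>d - t = d + t\<close>, so the last two layer sums
always agree.
Evaluating \<^const>\<open>mset_set\<close> on pairs below needs the lexicographic order on pairs.\<close>

definition cube_2 :: "nat \<Rightarrow> nat \<Rightarrow> nat \<Rightarrow> nat" where
  "cube_2 i j k = (if (i, j, k) = (1, 1, 1) then 6 else if (i, j, k) = (1, 1, 2) then 4
     else if (i, j, k) = (1, 2, 1) then 3 else if (i, j, k) = (1, 2, 2) then 1
     else if (i, j, k) = (2, 1, 2) then 7 else if (i, j, k) = (2, 2, 2) then 1 else 0)"

lemma sarvate_beam_cube_2: "sarvate_beam_cube 2 cube_2"
  unfolding sarvate_beam_cube_def line_sums_def cube_2_def by code_simp

theorem theorem4p1: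
  fixes n :: nat
  assumes "n \<ge> 2"
  shows "\<exists>C. sarvate_beam_cube n C"
proof (cases "n = 2")
  case True
  then show ?thesis using sarvate_beam_cube_2 by blast
next
  case False
  with assms have "3 \<le> n" by simp
  then obtain L where "admissible_layers n L"
    using admissible_layers_exist by blast
  moreover have "0 < n" using assms by simp
  ultimately show ?thesis
    using sarvate_beam_layered_cube by blast
qed

end
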